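(* Let $E=(C,V)$ be an approval-based election and let $S\subsetneq C$ be a winning committee under the $t_{\mathrm{maj}}$-Threshold rule with $|S|$ odd. Then for every candidate $c\in C\setminus S$, the committee $S\cup\{c\}$ is also a winning committee under the $t_{\mathrm{maj}}$-Threshold rule.
   Context: An approval-based election $E=(C,V)$ consists of a finite set $C$ of candidates and a list $V=(v_1,\dots,v_n)$ of voters, each identified with its approval ballot $v_i\subseteq C$. Under the $t_{\mathrm{maj}}$-Threshold rule, a voter $v_i$ approves a committee $S\subseteq C$ if $|S\cap v_i|\ge |S|/2$, and the rule outputs (as winning committees) all committees $S\subseteq C$ approved by the largest number of voters. *)

theory Defs
  imports Main
begin

definition election :: "'a set \<Rightarrow> 'a set list \<Rightarrow> bool" where
  "election C V \<longleftrightarrow> finite C \<and> (\<forall>v\<in>set V. v \<subseteq> C)"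

definition tmaj_approves :: "'a set \<Rightarrow> 'a set \<Rightarrow> bool" where
  "tmaj_approves v S \<longleftrightarrow> 2 * card (S \<inter> v) \<ge> card S"

definition tmaj_score :: "'a set list \<Rightarrow> 'a set \<Rightarrow> nat" where
  "tmaj_score V S = length (filter (\<lambda>v. tmaj_approves v S) V)"

definition tmaj_winning :: "'a set \<Rightarrow> 'a set list \<Rightarrow> 'a set \<Rightarrow> bool" where
  "tmaj_winning C V S \<longleftrightarrow> S \<subseteq> C \<and> (\<forall>T. T \<subseteq> C \<longrightarrow> tmaj_score V T \<le> tmaj_score V S)"

end

theory Submission
  imports Defs
begin

text \<open>For odd \<open>|S| = 2k + 1\<close>, approval of \<open>S\<close> means \<open>|S \<inter> v| \<ge> k + 1\<close>, which is
  already half of \<open>|S| + 1\<close>; so adding any candidate keeps every supporter of \<open>S\<close>.\<close>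

lemma length_filter_mono:
  assumes "\<And>x. x \<in> set xs \<Longrightarrow> P x \<Longrightarrow> Q x"
  shows "length (filter P xs) \<le> length (filter Q xs)"
  using assms by (induction xs) auto

lemma tmaj_approves_insert_odd:
  assumes "odd (card S)" "c \<notin> S" "tmaj_approves v S"
  shows "tmaj_approves v (insert c S)"
proof -
  have "finite S" \<comment> \<open>\<open>card\<close> of an infinite set is \<open>0\<close>, which is even\<close>
    using assms(1) card.infinite by fastforce
  obtain k where k: "card S = 2 * k + 1"
    using assms(1) oddE by blast
  have "2 * card (S \<inter> v) \<ge> card S"
    using assms(3) by (simp add: tmaj_approves_def)
  moreover have "card (S \<inter> v) \<le> card (insert c S \<inter> v)"
    using \<open>finite S\<close> by (intro card_mono) auto
  moreover have "card (insert c S) = card S + 1"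
    using \<open>finite S\<close> assms(2) by simp
  ultimately show ?thesis
    unfolding tmaj_approves_def k by presburger
qed

lemma tmaj_score_insert_odd:
  assumes "odd (card S)" "c \<notin> S"
  shows "tmaj_score V S \<le> tmaj_score V (insert c S)"
  unfolding tmaj_score_def
  by (rule length_filter_mono) (rule tmaj_approves_insert_odd[OF assms])

theorem mainTheorem12:
  fixes C :: "'a set" and V :: "'a set list" and S :: "'a set" and c :: 'a
  assumes "election C V"
    and "tmaj_winning C V S"
    and "S \<subset> C"
    and "odd (card S)"
    and "c \<in> C - S"
  shows "tmaj_winning C V (insert c S)"
proof -
  have "tmaj_score V S \<le> tmaj_score V (insert c S)"
    using assms(4,5) by (intro tmaj_score_insert_odd) auto
  then show ?thesis
    using assms(2,3,5) unfolding tmaj_winning_def using le_trans by blast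
qed

end
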